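(* Let $n$ be a positive integer and $\mathcal{X}$ a class of finite groups with $c^{\mathcal{X}}_n<1$. Let $G$ be a profinite group, $M$ a normal open subgroup of $G$, and $\phi$ a continuous automorphism of $M$ with $\phi^n=\mathrm{id}$ such that for every normal open subgroup $N$ of $G$ contained in $M$ we have $N^\phi\subseteq N$ and $M/N\in\mathcal{X}$. If $X_{n,\phi}(M)\neq M$, then $\mathbf{m}_M(X_{n,\phi}(M))\leq c^{\mathcal{X}}_n$.
   Context: $\mathbf{m}_M$ denotes the normalized Haar measure of the compact group $M$. For a group $K$ and an automorphism $\phi$ of $K$ whose order divides $n$, writing $x^\phi$ for the image of $x$, $X_{n,\phi}(K):=\{x\in K : x x^{\phi} x^{\phi^2}\cdots x^{\phi^{n-1}}=1\}$. For a class $\mathcal{X}$ of finite groups, $$c^{\mathcal{X}}_n:=\sup\left(\left\{\frac{|X_{n,\phi}(H)|}{|H|} : H\in\mathcal{X},\ \phi\in \mathrm{Aut}(H),\ \phi^n=\mathrm{id}\right\}\setminus\{1\}\right).$$ *)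

theory Defs
  imports "HOL-Analysis.Analysis" "HOL-Algebra.Algebra"
begin

definition topological_group :: "('a, 'm) monoid_scheme \<Rightarrow> 'a topology \<Rightarrow> bool" where
  "topological_group G T \<longleftrightarrow> group G \<and> topspace T = carrier G
     \<and> continuous_map (prod_topology T T) T (\<lambda>(x, y). x \<otimes>\<^bsub>G\<^esub> y)
     \<and> continuous_map T T (\<lambda>x. inv\<^bsub>G\<^esub> x)"

definition totally_disconnected_space :: "'a topology \<Rightarrow> bool" where
  "totally_disconnected_space T \<longleftrightarrow> (\<forall>S. connectedin T S \<longrightarrow> (\<exists>a. S \<subseteq> {a}))"

definition profinite_group :: "('a, 'm) monoid_scheme \<Rightarrow> 'a topology \<Rightarrow> bool" where
  "profinite_group G T \<longleftrightarrow> topological_group G T \<and> compact_space T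
     \<and> Hausdorff_space T \<and> totally_disconnected_space T"

fun twisted_prod :: "('a, 'm) monoid_scheme \<Rightarrow> ('a \<Rightarrow> 'a) \<Rightarrow> nat \<Rightarrow> 'a \<Rightarrow> 'a" where
  "twisted_prod K \<phi> 0 x = \<one>\<^bsub>K\<^esub>"
| "twisted_prod K \<phi> (Suc k) x = twisted_prod K \<phi> k x \<otimes>\<^bsub>K\<^esub> (\<phi> ^^ k) x"

definition X_set :: "('a, 'm) monoid_scheme \<Rightarrow> nat \<Rightarrow> ('a \<Rightarrow> 'a) \<Rightarrow> 'a set" where
  "X_set K n \<phi> = {x \<in> carrier K. twisted_prod K \<phi> n x = \<one>\<^bsub>K\<^esub>}"

definition aut_order_dvd :: "('a, 'm) monoid_scheme \<Rightarrow> nat \<Rightarrow> ('a \<Rightarrow> 'a) \<Rightarrow> bool" where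
  "aut_order_dvd H n \<phi> \<longleftrightarrow> \<phi> \<in> iso H H \<and> (\<forall>x \<in> carrier H. (\<phi> ^^ n) x = x)"

text \<open>The constant c_n^X for a class X of finite groups (represented by a predicate;
  membership of a group is understood up to isomorphism).\<close>
definition c_const :: "(('b, 'c) monoid_scheme \<Rightarrow> bool) \<Rightarrow> nat \<Rightarrow> real" where
  "c_const Cls n = Sup ({real (card (X_set H n \<phi>)) / real (card (carrier H)) | H \<phi>.
                          Cls H \<and> aut_order_dvd H n \<phi>} - {1})"

definition haar_measure :: "('a, 'm) monoid_scheme \<Rightarrow> 'a topology \<Rightarrow> 'a measure \<Rightarrow> bool" where
  "haar_measure K T \<mu> \<longleftrightarrow>
     space \<mu> = carrier K
   \<and> sets \<mu> = sigma_sets (carrier K) {U. openin T U}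
   \<and> emeasure \<mu> (carrier K) = 1
   \<and> (\<forall>g \<in> carrier K. \<forall>A \<in> sets \<mu>. emeasure \<mu> (g <#\<^bsub>K\<^esub> A) = emeasure \<mu> A)
   \<and> (\<forall>A \<in> sets \<mu>. emeasure \<mu> A = (INF U \<in> {U. openin T U \<and> A \<subseteq> U}. emeasure \<mu> U))
   \<and> (\<forall>U. openin T U \<longrightarrow> emeasure \<mu> U = (SUP C \<in> {C. compactin T C \<and> C \<subseteq> U}. emeasure \<mu> C))"

end

(* Choose x in M outside X = X_{n,phi}(M). Its twisted product t is nontrivial, and since the open
   normal subgroups of a profinite group form a neighbourhood basis of 1 (compactness and total
   disconnectedness give clopen neighbourhoods, which contain open subgroups, whose normal cores are
   still open), some open normal N <= M misses t. Then phi induces an automorphism of the finite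
   group M/N, of order dividing n; X is contained in the union of the cosets in X_{n,phi}(M/N),
   which does not contain the coset xN. All cosets of N have Haar measure 1/|M/N|, so
   m(X) <= |X_{n,phi}(M/N)| / |M/N|, a ratio different from 1 that occurs in the supremum defining
   c_n. *)

theory Submission
  imports Defs
begin

section \<open>Open normal subgroups of profinite groups\<close>

lemma totally_disconnected_compact_clopen_separation:
  assumes "compact_space T" "Hausdorff_space T" "totally_disconnected_space T"
    and a: "a \<in> topspace T" and b: "b \<in> topspace T" and "a \<noteq> b"
  obtains U where "closedin T U" "openin T U" "a \<in> U" "b \<notin> U"
proof -
  obtain c where c: "connected_component_of_set T a \<subseteq> {c}"
    using assms(3) connectedin_connected_component_of[of T a]
    unfolding totally_disconnected_space_def by blast
  have "connected_component_of T a a"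
    using a by (simp add: connected_component_of_refl)
  then have "\<not> connected_component_of T a b"
    using c \<open>a \<noteq> b\<close> by auto
  moreover have "quasi_component_of T a = connected_component_of T a"
    using assms(1,2) by (intro quasi_eq_connected_component_of) auto
  ultimately have "\<not> quasi_component_of T a b"
    by metis
  then obtain U where U: "closedin T U" "openin T U" "\<not> (a \<in> U \<longleftrightarrow> b \<in> U)"
    using a b unfolding quasi_component_of_def by blast
  show thesis
  proof (cases "a \<in> U")
    case True
    then show thesis using U that by blast
  next
    case False
    then show thesis
      using U a b that[of "topspace T - U"] by (auto simp: openin_diff closedin_diff)
  qed
qed

lemma topological_group_continuous_map_left_mult:
  assumes "topological_group G T" "a \<in> carrier G"
  shows "continuous_map T T (\<lambda>x. a \<otimes>\<^bsub>G\<^esub> x)"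
proof -
  have "continuous_map T (prod_topology T T) (\<lambda>x. (a, x))"
    using assms by (intro continuous_map_pairedI) (auto simp: topological_group_def)
  then show ?thesis
    using continuous_map_compose assms by (fastforce simp: topological_group_def o_def)
qed

lemma topological_group_continuous_map_right_mult:
  assumes "topological_group G T" "a \<in> carrier G"
  shows "continuous_map T T (\<lambda>x. x \<otimes>\<^bsub>G\<^esub> a)"
proof -
  have "continuous_map T (prod_topology T T) (\<lambda>x. (x, a))"
    using assms by (intro continuous_map_pairedI) (auto simp: topological_group_def)
  then show ?thesis
    using continuous_map_compose assms by (fastforce simp: topological_group_def o_def)
qed

lemma topological_group_subgroup:
  assumes tg: "topological_group G T" and H: "subgroup H G"
  shows "topological_group (G\<lparr>carrier := H\<rparr>) (subtopology T H)"
proof -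
  have grp: "group G" and ts: "topspace T = carrier G"
    and mult: "continuous_map (prod_topology T T) T (\<lambda>(x, y). x \<otimes>\<^bsub>G\<^esub> y)"
    and inv: "continuous_map T T (\<lambda>x. inv\<^bsub>G\<^esub> x)"
    using tg by (auto simp: topological_group_def)
  have HG: "H \<subseteq> carrier G" by (rule subgroup.subset[OF H])
  have "continuous_map (prod_topology (subtopology T H) (subtopology T H)) (subtopology T H)
          (\<lambda>(x, y). x \<otimes>\<^bsub>G\<^esub> y)"
    unfolding subtopology_Times[symmetric] continuous_map_in_subtopology
    using continuous_map_from_subtopology[OF mult] subgroup.m_closed[OF H] by auto
  moreover have "continuous_map (subtopology T H) (subtopology T H) (\<lambda>x. inv\<^bsub>G\<lparr>carrier := H\<rparr>\<^esub> x)"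
  proof -
    have "continuous_map (subtopology T H) (subtopology T H) (\<lambda>x. inv\<^bsub>G\<^esub> x)"
      unfolding continuous_map_in_subtopology
      using continuous_map_from_subtopology[OF inv] subgroup.m_inv_closed[OF H] by auto
    then show ?thesis
      by (rule continuous_map_eq) (simp add: group.m_inv_consistent[OF grp H])
  qed
  ultimately show ?thesis
    using subgroup.subgroup_is_group[OF H grp] ts HG
    by (auto simp: topological_group_def inf.absorb2)
qed

definition normal_core :: "('a, 'b) monoid_scheme \<Rightarrow> 'a set \<Rightarrow> 'a set" where
  "normal_core G H = {x \<in> carrier G. \<forall>g \<in> carrier G. g \<otimes>\<^bsub>G\<^esub> x \<otimes>\<^bsub>G\<^esub> inv\<^bsub>G\<^esub> g \<in> H}"

context group
begin

lemma openin_l_coset: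
  assumes tg: "topological_group G T" and a: "a \<in> carrier G" and U: "openin T U"
  shows "openin T (a <# U)"
proof -
  have ts: "topspace T = carrier G" using tg by (simp add: topological_group_def)
  have UG: "U \<subseteq> carrier G" using openin_subset[OF U] ts by simp
  have "a <# U = {x \<in> topspace T. inv a \<otimes> x \<in> U}"
  proof safe
    fix x assume "x \<in> a <# U"
    then obtain u where "u \<in> U" "x = a \<otimes> u" by (auto simp: l_coset_def)
    then show "x \<in> topspace T" "inv a \<otimes> x \<in> U"
      using UG a ts by (auto simp: m_assoc[symmetric])
  next
    fix x assume "x \<in> topspace T" "inv a \<otimes> x \<in> U"
    then show "x \<in> a <# U" using a ts unfolding l_coset_def
      by (auto intro!: bexI[of _ "inv a \<otimes> x"] simp: m_assoc[symmetric])
  qed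
  then show ?thesis
    using openin_continuous_map_preimage[OF topological_group_continuous_map_left_mult[OF tg] U] a
    by simp
qed

lemma openin_r_coset:
  assumes tg: "topological_group G T" and a: "a \<in> carrier G" and U: "openin T U"
  shows "openin T (U #> a)"
proof -
  have ts: "topspace T = carrier G" using tg by (simp add: topological_group_def)
  have UG: "U \<subseteq> carrier G" using openin_subset[OF U] ts by simp
  have "U #> a = {x \<in> topspace T. x \<otimes> inv a \<in> U}"
  proof safe
    fix x assume "x \<in> U #> a"
    then obtain u where "u \<in> U" "x = u \<otimes> a" by (auto simp: r_coset_def)
    then show "x \<in> topspace T" "x \<otimes> inv a \<in> U"
      using UG a ts by (auto simp: m_assoc)
  next
    fix x assume "x \<in> topspace T" "x \<otimes> inv a \<in> U"
    then show "x \<in> U #> a" using a ts unfolding r_coset_def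
      by (auto intro!: bexI[of _ "x \<otimes> inv a"] simp: m_assoc)
  qed
  then show ?thesis
    using openin_continuous_map_preimage[OF topological_group_continuous_map_right_mult[OF tg] U] a
    by simp
qed

lemma openin_subgroup_if_contains_open_nbhd:
  assumes tg: "topological_group G T" and H: "subgroup H G"
    and W: "openin T W" "\<one> \<in> W" "W \<subseteq> H"
  shows "openin T H"
proof (subst openin_subopen, intro ballI)
  fix h assume h: "h \<in> H"
  then have hG: "h \<in> carrier G" using subgroup.subset[OF H] by auto
  have "h <# W \<subseteq> H"
    using W(3) subgroup.m_closed[OF H h] by (auto simp: l_coset_def)
  moreover have "h \<in> h <# W"
    using W(2) hG by (auto simp: l_coset_def intro!: bexI[of _ \<one>])
  ultimately show "\<exists>V. openin T V \<and> h \<in> V \<and> V \<subseteq> H"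
    using openin_l_coset[OF tg hG W(1)] by blast
qed

lemma clopen_absorbing_open_nbhd:
  assumes tg: "topological_group G T" and cs: "compact_space T"
    and U: "closedin T U" "openin T U"
  obtains V where "openin T V" "\<one> \<in> V" "\<And>v. v \<in> V \<Longrightarrow> U #> v \<subseteq> U"
proof -
  have ts: "topspace T = carrier G"
    and mult: "continuous_map (prod_topology T T) T (\<lambda>(x, y). x \<otimes> y)"
    using tg by (auto simp: topological_group_def)
  define W where "W = {z \<in> topspace (prod_topology T T). (\<lambda>(x, y). x \<otimes> y) z \<in> U}"
  have "openin (prod_topology T T) W"
    unfolding W_def by (rule openin_continuous_map_preimage[OF mult U(2)])
  moreover have "compactin T U" by (rule closedin_compact_space[OF cs U(1)])
  moreover have "U \<times> {\<one>} \<subseteq> W"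
    using openin_subset[OF U(2)] ts by (auto simp: W_def)
  ultimately obtain U' V where V: "openin T V" "\<one> \<in> V" and UV: "U \<subseteq> U'" "U' \<times> V \<subseteq> W"
    using tube_lemma_left[of T T W U \<one>] ts by auto
  show thesis
  proof (rule that[OF V])
    fix v assume "v \<in> V"
    then have "U \<times> {v} \<subseteq> W" using UV by blast
    then show "U #> v \<subseteq> U" by (auto simp: W_def r_coset_def)
  qed
qed

lemma subgroup_right_stabilizer:
  assumes UG: "U \<subseteq> carrier G"
  shows "subgroup {g \<in> carrier G. U #> g = U} G"
proof
  fix x y assume x: "x \<in> {g \<in> carrier G. U #> g = U}" and y: "y \<in> {g \<in> carrier G. U #> g = U}"
  then show "x \<otimes> y \<in> {g \<in> carrier G. U #> g = U}"
    using coset_mult_assoc[OF UG, of x y] by auto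
next
  fix x assume x: "x \<in> {g \<in> carrier G. U #> g = U}"
  then have xG: "x \<in> carrier G" and "U #> x = U" by auto
  then have "U #> inv x = (U #> x) #> inv x" by simp
  also have "\<dots> = U"
    using coset_mult_assoc[OF UG xG inv_closed[OF xG]] xG UG by (simp add: coset_mult_one)
  finally show "inv x \<in> {g \<in> carrier G. U #> g = U}" using xG by simp
next
  show "\<one> \<in> {g \<in> carrier G. U #> g = U}"
    using UG by (simp add: coset_mult_one)
qed auto

lemma open_subgroup_in_clopen_nbhd:
  assumes tg: "topological_group G T" and cs: "compact_space T"
    and U: "closedin T U" "openin T U" "\<one> \<in> U"
  obtains H where "subgroup H G" "openin T H" "H \<subseteq> U"
proof -
  have ts: "topspace T = carrier G" and inv: "continuous_map T T (\<lambda>x. inv x)"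
    using tg by (auto simp: topological_group_def)
  have UG: "U \<subseteq> carrier G" using openin_subset[OF U(2)] ts by simp
  obtain V where V: "openin T V" "\<one> \<in> V" and shrink: "\<And>v. v \<in> V \<Longrightarrow> U #> v \<subseteq> U"
    using clopen_absorbing_open_nbhd[OF tg cs U(1,2)] by blast
  define H where "H = {g \<in> carrier G. U #> g = U}"
  have H: "subgroup H G" unfolding H_def by (rule subgroup_right_stabilizer[OF UG])
  have HU: "H \<subseteq> U"
  proof
    fix h assume h: "h \<in> H"
    then have hG: "h \<in> carrier G" and "U #> h = U" by (auto simp: H_def)
    have "\<one> \<otimes> h \<in> U #> h" using U(3) unfolding r_coset_def by blast
    then show "h \<in> U" using hG \<open>U #> h = U\<close> by simp
  qed
  define W where "W = {x \<in> topspace T. inv x \<in> V} \<inter> V"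
  have W: "openin T W" "\<one> \<in> W"
    unfolding W_def using V ts openin_continuous_map_preimage[OF inv V(1)] by auto
  have "W \<subseteq> H"
  proof
    fix w assume "w \<in> W"
    then have w: "w \<in> carrier G" "w \<in> V" "inv w \<in> V" using ts by (auto simp: W_def)
    have "U = (U #> inv w) #> w"
      using coset_mult_assoc[OF UG inv_closed[OF w(1)] w(1)] w(1) UG by simp
    also have "\<dots> \<subseteq> U #> w"
      using shrink[OF w(3)] by (auto simp: r_coset_def)
    finally have "U \<subseteq> U #> w" .
    then show "w \<in> H"
      using shrink[OF w(2)] w(1) unfolding H_def by blast
  qed
  show thesis
    using that[OF H openin_subgroup_if_contains_open_nbhd[OF tg H W \<open>W \<subseteq> H\<close>] HU] .
qed

lemma normal_core_subset: "normal_core G H \<subseteq> H"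
proof
  fix x assume "x \<in> normal_core G H"
  then have "\<one> \<otimes> x \<otimes> inv \<one> \<in> H" and "x \<in> carrier G"
    unfolding normal_core_def using one_closed by blast+
  then show "x \<in> H" by simp
qed

lemma normal_core_normal:
  assumes H: "subgroup H G"
  shows "normal_core G H \<lhd> G"
  unfolding normal_inv_iff
proof (intro conjI ballI)
  show "subgroup (normal_core G H) G"
  proof
    fix x y assume "x \<in> normal_core G H" "y \<in> normal_core G H"
    moreover have "g \<otimes> (x \<otimes> y) \<otimes> inv g = (g \<otimes> x \<otimes> inv g) \<otimes> (g \<otimes> y \<otimes> inv g)"
      if "g \<in> carrier G" "x \<in> carrier G" "y \<in> carrier G" for g
      using that by (simp add: m_assoc inv_solve_left)
    ultimately show "x \<otimes> y \<in> normal_core G H"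
      using subgroup.m_closed[OF H] by (auto simp: normal_core_def)
  next
    fix x assume "x \<in> normal_core G H"
    moreover have "g \<otimes> inv x \<otimes> inv g = inv (g \<otimes> x \<otimes> inv g)"
      if "g \<in> carrier G" "x \<in> carrier G" for g
      using that by (simp add: inv_mult_group m_assoc)
    ultimately show "inv x \<in> normal_core G H"
      using subgroup.m_inv_closed[OF H] by (auto simp: normal_core_def)
  qed (use subgroup.one_closed[OF H] in \<open>auto simp: normal_core_def\<close>)
next
  fix y x assume "y \<in> carrier G" "x \<in> normal_core G H"
  moreover have "g \<otimes> (y \<otimes> x \<otimes> inv y) \<otimes> inv g = (g \<otimes> y) \<otimes> x \<otimes> inv (g \<otimes> y)"
    if "g \<in> carrier G" "y \<in> carrier G" "x \<in> carrier G" for g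
    using that by (simp add: inv_mult_group m_assoc)
  ultimately show "y \<otimes> x \<otimes> inv y \<in> normal_core G H"
    by (auto simp: normal_core_def)
qed

lemma normal_core_eq_INT_conjugates:
  assumes H: "subgroup H G" and F: "F \<subseteq> carrier G" "carrier G \<subseteq> (\<Union>f \<in> F. H #> f)"
  shows "normal_core G H = (\<Inter>f \<in> F. {x \<in> carrier G. f \<otimes> x \<otimes> inv f \<in> H}) \<inter> carrier G"
proof
  show "normal_core G H \<subseteq> (\<Inter>f \<in> F. {x \<in> carrier G. f \<otimes> x \<otimes> inv f \<in> H}) \<inter> carrier G"
    using F(1) by (auto simp: normal_core_def)
next
  show "(\<Inter>f \<in> F. {x \<in> carrier G. f \<otimes> x \<otimes> inv f \<in> H}) \<inter> carrier G \<subseteq> normal_core G H"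
  proof
    fix x assume x: "x \<in> (\<Inter>f \<in> F. {x \<in> carrier G. f \<otimes> x \<otimes> inv f \<in> H}) \<inter> carrier G"
    have "g \<otimes> x \<otimes> inv g \<in> H" if g: "g \<in> carrier G" for g
    proof -
      obtain f h where f: "f \<in> F" and h: "h \<in> H" and gfh: "g = h \<otimes> f"
        using F(2) g by (auto simp: r_coset_def)
      have "f \<otimes> x \<otimes> inv f \<in> H" using x f by auto
      then have "h \<otimes> (f \<otimes> x \<otimes> inv f) \<otimes> inv h \<in> H"
        using h subgroup.m_closed[OF H] subgroup.m_inv_closed[OF H] by blast
      moreover have "h \<otimes> (f \<otimes> x \<otimes> inv f) \<otimes> inv h = g \<otimes> x \<otimes> inv g"
        using x f h F(1) subgroup.subset[OF H] by (auto simp: gfh inv_mult_group m_assoc subsetD)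
      ultimately show ?thesis by simp
    qed
    then show "x \<in> normal_core G H" using x by (simp add: normal_core_def)
  qed
qed

lemma openin_normal_core:
  assumes tg: "topological_group G T" and cs: "compact_space T"
    and H: "subgroup H G" "openin T H"
  shows "openin T (normal_core G H)"
proof -
  have ts: "topspace T = carrier G" using tg by (simp add: topological_group_def)
  have "topspace T \<subseteq> \<Union>((\<lambda>a. H #> a) ` carrier G)"
    using ts rcos_self[OF _ H(1)] by blast
  moreover have "compactin T (topspace T)" using cs by (simp add: compact_space_def)
  ultimately obtain F where F: "F \<subseteq> carrier G" "finite F" "carrier G \<subseteq> (\<Union>f \<in> F. H #> f)"
    using openin_r_coset[OF tg _ H(2)] ts unfolding compactin_def
    by (metis (no_types, lifting) finite_subset_image imageE)
  have "openin T {x \<in> carrier G. f \<otimes> x \<otimes> inv f \<in> H}" if "f \<in> F" for f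
  proof -
    have fG: "f \<in> carrier G" using that F(1) by auto
    have "continuous_map T T (\<lambda>x. f \<otimes> x \<otimes> inv f)"
      using continuous_map_compose[OF topological_group_continuous_map_left_mult[OF tg fG]
          topological_group_continuous_map_right_mult[OF tg inv_closed[OF fG]]]
      by (simp add: o_def)
    from openin_continuous_map_preimage[OF this H(2)] show ?thesis
      using ts by simp
  qed
  from openin_INT[OF F(2) this] show ?thesis
    using normal_core_eq_INT_conjugates[OF H(1) F(1,3)] ts by simp
qed

lemma profinite_open_normal_subgroup_avoiding:
  assumes prof: "profinite_group G T" and M: "subgroup M G" "openin T M"
    and t: "t \<in> carrier G" "t \<noteq> \<one>\<^bsub>G\<^esub>"
  obtains N where "N \<lhd> G" "openin T N" "N \<subseteq> M" "t \<notin> N"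
proof -
  have tg: "topological_group G T" and cs: "compact_space T"
    using prof by (auto simp: profinite_group_def)
  have ts: "topspace T = carrier G" using tg by (simp add: topological_group_def)
  obtain U where U: "closedin T U" "openin T U" "\<one> \<in> U" "t \<notin> U"
    using totally_disconnected_compact_clopen_separation[of T \<one> t] prof t ts
    by (auto simp: profinite_group_def)
  obtain H where H: "subgroup H G" "openin T H" "H \<subseteq> U"
    using open_subgroup_in_clopen_nbhd[OF tg cs U(1-3)] .
  have HM: "subgroup (H \<inter> M) G" "openin T (H \<inter> M)"
    using subgroups_Inter_pair[OF H(1) M(1)] openin_Int[OF H(2) M(2)] .
  show thesis
  proof
    show "normal_core G (H \<inter> M) \<lhd> G" by (rule normal_core_normal[OF HM(1)])
    show "openin T (normal_core G (H \<inter> M))" by (rule openin_normal_core[OF tg cs HM])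
    show "normal_core G (H \<inter> M) \<subseteq> M" "t \<notin> normal_core G (H \<inter> M)"
      using normal_core_subset[of "H \<inter> M"] H(3) U(4) by auto
  qed
qed

end

section \<open>Twisted products under homomorphisms and quotients\<close>

lemma funpow_closed: "f ` S \<subseteq> S \<Longrightarrow> x \<in> S \<Longrightarrow> (f ^^ k) x \<in> S"
  by (induction k) auto

lemma funpow_commute_on:
  assumes "f ` S \<subseteq> S" "\<And>x. x \<in> S \<Longrightarrow> h (f x) = g (h x)" "x \<in> S"
  shows "h ((f ^^ k) x) = (g ^^ k) (h x)"
  by (induction k) (use assms funpow_closed[OF assms(1,3)] in auto)

lemma bij_betw_if_funpow_id:
  assumes fS: "f ` S \<subseteq> S" and id: "\<forall>x \<in> S. (f ^^ n) x = x" and "n > 0"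
  shows "bij_betw f S S"
proof -
  obtain m where n: "n = Suc m" using \<open>n > 0\<close> by (cases n) auto
  have inv: "(f ^^ m) (f x) = x" "f ((f ^^ m) x) = x" if "x \<in> S" for x
    using id that by (simp_all add: n funpow_Suc_right del: funpow.simps, simp add: n)
  show ?thesis
    by (rule bij_betw_byWitness[of S "f ^^ m"]) (use inv fS funpow_closed[OF fS] in auto)
qed

lemma twisted_prod_closed:
  assumes "monoid K" "\<phi> ` carrier K \<subseteq> carrier K" "x \<in> carrier K"
  shows "twisted_prod K \<phi> k x \<in> carrier K"
  using assms by (induction k) (auto intro: monoid.m_closed funpow_closed)

lemma hom_twisted_prod:
  assumes h: "h \<in> hom A B" and A: "group A" and B: "group B"
    and \<alpha>: "\<alpha> ` carrier A \<subseteq> carrier A" and intertwine: "\<And>x. x \<in> carrier A \<Longrightarrow> h (\<alpha> x) = \<beta> (h x)"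
    and x: "x \<in> carrier A"
  shows "h (twisted_prod A \<alpha> k x) = twisted_prod B \<beta> k (h x)"
proof (induction k)
  case 0
  then show ?case using hom_one[OF h A B] by simp
next
  case (Suc k)
  have "twisted_prod A \<alpha> k x \<in> carrier A" "(\<alpha> ^^ k) x \<in> carrier A"
    using twisted_prod_closed[OF group.is_monoid[OF A] \<alpha> x] funpow_closed[OF \<alpha> x] by auto
  then show ?case
    using Suc hom_mult[OF h] funpow_commute_on[of \<alpha> "carrier A" h \<beta>, OF \<alpha> intertwine x] by simp
qed

lemma hom_mem_X_set_iff:
  assumes h: "h \<in> hom A B" "inj_on h (carrier A)" and A: "group A" and B: "group B"
    and \<alpha>: "\<alpha> ` carrier A \<subseteq> carrier A" and intertwine: "\<And>x. x \<in> carrier A \<Longrightarrow> h (\<alpha> x) = \<beta> (h x)"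
    and x: "x \<in> carrier A"
  shows "h x \<in> X_set B n \<beta> \<longleftrightarrow> x \<in> X_set A n \<alpha>"
proof -
  have "twisted_prod B \<beta> n (h x) = h (twisted_prod A \<alpha> n x)"
    using hom_twisted_prod[OF h(1) A B \<alpha> intertwine x] by simp
  moreover have "h (twisted_prod A \<alpha> n x) = \<one>\<^bsub>B\<^esub> \<longleftrightarrow> twisted_prod A \<alpha> n x = \<one>\<^bsub>A\<^esub>"
    using h hom_one[OF h(1) A B] twisted_prod_closed[OF group.is_monoid[OF A] \<alpha> x]
      monoid.one_closed[OF group.is_monoid[OF A]]
    by (metis inj_on_eq_iff)
  ultimately show ?thesis
    using x h(1) by (auto simp: X_set_def hom_def)
qed

lemma X_set_iso_image:
  assumes A: "group A" and B: "group B" and h: "h \<in> iso A B" and \<alpha>: "aut_order_dvd A n \<alpha>"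
  obtains \<beta> where "aut_order_dvd B n \<beta>" "X_set B n \<beta> = h ` X_set A n \<alpha>"
proof -
  define g where "g = inv_into (carrier A) h"
  define \<beta> where "\<beta> = h \<circ> \<alpha> \<circ> g"
  have hom: "h \<in> hom A B" and bij: "bij_betw h (carrier A) (carrier B)"
    using h by (auto simp: iso_def)
  have \<alpha>iso: "\<alpha> \<in> iso A A" and \<alpha>n: "\<forall>x \<in> carrier A. (\<alpha> ^^ n) x = x"
    using \<alpha> by (auto simp: aut_order_dvd_def)
  have \<alpha>A: "\<alpha> ` carrier A \<subseteq> carrier A" using \<alpha>iso by (auto simp: iso_def hom_def)
  have g: "g \<in> iso B A" unfolding g_def by (rule group.iso_set_sym[OF A h])
  have gh: "g (h x) = x" if "x \<in> carrier A" for x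
    unfolding g_def using bij that by (simp add: bij_betw_def inv_into_f_f)
  have hg: "h (g y) = y" if "y \<in> carrier B" for y
    unfolding g_def using bij that by (simp add: bij_betw_inv_into_right)
  have gB: "g y \<in> carrier A" if "y \<in> carrier B" for y
    using g that by (auto simp: iso_def hom_def)
  have intertwine: "h (\<alpha> x) = \<beta> (h x)" if "x \<in> carrier A" for x
    using that by (simp add: \<beta>_def gh)
  have mem: "h x \<in> X_set B n \<beta> \<longleftrightarrow> x \<in> X_set A n \<alpha>" if "x \<in> carrier A" for x
    using hom_mem_X_set_iff[OF hom bij_betw_imp_inj_on[OF bij] A B \<alpha>A _ that] intertwine by blast
  have "\<beta> \<in> iso B B"
    unfolding \<beta>_def by (intro iso_set_trans[OF g] iso_set_trans[OF \<alpha>iso h])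
  moreover have "(\<beta> ^^ n) y = y" if "y \<in> carrier B" for y
    using funpow_commute_on[of \<alpha> "carrier A" h \<beta>, OF \<alpha>A intertwine gB[OF that]] \<alpha>n gB[OF that] hg[OF that]
    by metis
  moreover have "X_set B n \<beta> = h ` X_set A n \<alpha>"
  proof (intro equalityI subsetI)
    fix y assume y: "y \<in> X_set B n \<beta>"
    then have "y \<in> carrier B" by (simp add: X_set_def)
    then show "y \<in> h ` X_set A n \<alpha>"
      using y mem[OF gB] hg by (metis image_eqI)
  next
    fix y assume "y \<in> h ` X_set A n \<alpha>"
    then show "y \<in> X_set B n \<beta>"
      using mem by (auto simp: X_set_def)
  qed
  ultimately show thesis
    using that[of \<beta>] by (simp add: aut_order_dvd_def)
qed

lemma X_set_ratio_le_c_const_of_mem: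
  assumes Cls: "\<And>H. Cls H \<Longrightarrow> finite (carrier H)"
    and H: "Cls H" "aut_order_dvd H n \<phi>" and proper: "X_set H n \<phi> \<noteq> carrier H"
  shows "card (X_set H n \<phi>) / card (carrier H) \<le> c_const Cls n"
proof -
  define R where "R = {real (card (X_set H' n \<phi>')) / real (card (carrier H')) | H' \<phi>'.
                          Cls H' \<and> aut_order_dvd H' n \<phi>'} - {1}"
  have "X_set H n \<phi> \<subset> carrier H" using proper by (auto simp: X_set_def)
  then have "card (X_set H n \<phi>) < card (carrier H)"
    using psubset_card_mono Cls[OF H(1)] by blast
  then have "card (X_set H n \<phi>) / card (carrier H) \<noteq> 1"
    by (simp add: divide_eq_1_iff)
  then have "card (X_set H n \<phi>) / card (carrier H) \<in> R"
    unfolding R_def using H by blast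
  moreover have "bdd_above R"
  proof (rule bdd_aboveI)
    fix r assume "r \<in> R"
    then obtain H' \<phi>' where H': "Cls H'" "r = card (X_set H' n \<phi>') / card (carrier H')"
      unfolding R_def by blast
    have "card (X_set H' n \<phi>') \<le> card (carrier H')"
      using Cls[OF H'(1)] by (intro card_mono) (auto simp: X_set_def)
    then show "r \<le> 1" using H'(2) by (auto simp: divide_le_eq_1)
  qed
  ultimately show ?thesis
    unfolding c_const_def R_def[symmetric] by (rule cSup_upper)
qed

lemma X_set_ratio_le_c_const:
  assumes Cls: "\<And>H. Cls H \<Longrightarrow> group H \<and> finite (carrier H)"
    and H: "Cls H" and A: "group A" "A \<cong> H"
    and \<alpha>: "aut_order_dvd A n \<alpha>" and proper: "X_set A n \<alpha> \<noteq> carrier A"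
  shows "card (X_set A n \<alpha>) / card (carrier A) \<le> c_const Cls n"
proof -
  obtain h where h: "h \<in> iso A H" using A(2) by (auto simp: is_iso_def)
  then have inj: "inj_on h (carrier A)" and onto: "h ` carrier A = carrier H"
    by (auto simp: iso_def bij_betw_def)
  obtain \<beta> where \<beta>: "aut_order_dvd H n \<beta>" and X: "X_set H n \<beta> = h ` X_set A n \<alpha>"
    using X_set_iso_image[OF A(1) conjunct1[OF Cls[OF H]] h \<alpha>] .
  have XA: "X_set A n \<alpha> \<subseteq> carrier A" by (auto simp: X_set_def)
  have "card (X_set A n \<alpha>) / card (carrier A) = card (X_set H n \<beta>) / card (carrier H)"
    using X inj XA iso_same_card[OF A(2)] by (simp add: card_image inj_on_subset)
  also have "\<dots> \<le> c_const Cls n"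
  proof (rule X_set_ratio_le_c_const_of_mem[where Cls = Cls, OF _ H \<beta>])
    show "X_set H n \<beta> \<noteq> carrier H"
      using proper XA inj onto X by (metis inj_on_image_eq_iff subset_refl)
  qed (use Cls in blast)
  finally show ?thesis .
qed

context normal
begin

lemma image_r_coset:
  assumes \<phi>: "\<phi> \<in> hom G G" and \<phi>H: "\<phi> ` H = H" and a: "a \<in> carrier G"
  shows "\<phi> ` (H #> a) = H #> \<phi> a"
proof -
  have "\<phi> ` (H #> a) = (\<lambda>h. \<phi> h \<otimes> \<phi> a) ` H"
    using \<phi> a subset by (force simp: r_coset_def hom_mult)
  also have "\<dots> = (\<lambda>h. h \<otimes> \<phi> a) ` (\<phi> ` H)"
    by (simp add: image_image)
  also have "\<dots> = H #> \<phi> a"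
    unfolding \<phi>H by (auto simp: r_coset_def)
  finally show ?thesis .
qed

lemma aut_order_dvd_FactGroup:
  assumes \<phi>: "\<phi> \<in> hom G G" and \<phi>H: "\<phi> ` H = H"
    and \<phi>n: "\<forall>x \<in> carrier G. (\<phi> ^^ n) x = x" and "n > 0"
  shows "aut_order_dvd (G Mod H) n ((`) \<phi>)"
proof -
  have \<phi>G: "\<phi> ` carrier G \<subseteq> carrier G" using \<phi> by (auto simp: hom_def)
  have car: "carrier (G Mod H) = (\<lambda>a. H #> a) ` carrier G" by (rule carrier_FactGroup)
  have pow: "((`) \<phi> ^^ k) (H #> a) = H #> (\<phi> ^^ k) a" if "a \<in> carrier G" for k a
    using funpow_commute_on[of \<phi> "carrier G" "\<lambda>a. H #> a" "(`) \<phi>", OF \<phi>G _ that]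
      image_r_coset[OF \<phi> \<phi>H] by (metis \<phi>G image_subset_iff)
  have closed: "(`) \<phi> ` carrier (G Mod H) \<subseteq> carrier (G Mod H)"
    using car image_r_coset[OF \<phi> \<phi>H] \<phi>G by auto
  have periodic: "\<forall>C \<in> carrier (G Mod H). ((`) \<phi> ^^ n) C = C"
    using car pow \<phi>n by auto
  have "(`) \<phi> \<in> hom (G Mod H) (G Mod H)"
  proof (rule homI)
    fix C D assume "C \<in> carrier (G Mod H)" "D \<in> carrier (G Mod H)"
    then obtain a b where ab: "a \<in> carrier G" "b \<in> carrier G" and CD: "C = H #> a" "D = H #> b"
      using car by auto
    have "\<phi> a \<in> carrier G" "\<phi> b \<in> carrier G" using ab \<phi>G by auto
    then show "\<phi> ` (C \<otimes>\<^bsub>G Mod H\<^esub> D) = \<phi> ` C \<otimes>\<^bsub>G Mod H\<^esub> \<phi> ` D"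
      using ab image_r_coset[OF \<phi> \<phi>H] hom_mult[OF \<phi>] by (simp add: CD rcos_sum)
  qed (use closed in auto)
  then show ?thesis
    using bij_betw_if_funpow_id[OF closed periodic \<open>n > 0\<close>] periodic
    by (simp add: aut_order_dvd_def iso_def)
qed

lemma r_coset_in_X_set_FactGroup_iff:
  assumes \<phi>: "\<phi> \<in> hom G G" and \<phi>H: "\<phi> ` H = H" and a: "a \<in> carrier G"
  shows "H #> a \<in> X_set (G Mod H) n ((`) \<phi>) \<longleftrightarrow> twisted_prod G \<phi> n a \<in> H"
proof -
  have \<phi>G: "\<phi> ` carrier G \<subseteq> carrier G" using \<phi> by (auto simp: hom_def)
  have "twisted_prod (G Mod H) ((`) \<phi>) n (H #> a) = H #> twisted_prod G \<phi> n a"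
    using hom_twisted_prod[OF r_coset_hom_Mod is_group factorgroup_is_group \<phi>G _ a]
      image_r_coset[OF \<phi> \<phi>H] by metis
  moreover have "H #> t = H \<longleftrightarrow> t \<in> H" if "t \<in> carrier G" for t
    using that rcos_self[OF _ is_subgroup] subgroup.rcos_const[OF is_subgroup is_group] by auto
  ultimately show ?thesis
    using a twisted_prod_closed[OF is_monoid \<phi>G a] by (auto simp: X_set_def carrier_FactGroup)
qed

lemma X_set_subset_Union_FactGroup:
  assumes \<phi>: "\<phi> \<in> hom G G" and \<phi>H: "\<phi> ` H = H"
  shows "X_set G n \<phi> \<subseteq> \<Union>(X_set (G Mod H) n ((`) \<phi>))"
proof
  fix x assume "x \<in> X_set G n \<phi>"
  then have x: "x \<in> carrier G" "twisted_prod G \<phi> n x = \<one>" by (auto simp: X_set_def)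
  then have "H #> x \<in> X_set (G Mod H) n ((`) \<phi>)"
    using r_coset_in_X_set_FactGroup_iff[OF \<phi> \<phi>H x(1)] is_subgroup subgroup.one_closed by simp
  then show "x \<in> \<Union>(X_set (G Mod H) n ((`) \<phi>))"
    using rcos_self[OF x(1) is_subgroup] by blast
qed

end

section \<open>Haar measure of the cosets of an open normal subgroup\<close>

lemma finite_measure_haar_measure:
  assumes "haar_measure K T \<mu>"
  shows "finite_measure \<mu>"
  using assms by (intro finite_measureI) (simp add: haar_measure_def)

lemma sets_haar_measure_openin:
  assumes "haar_measure K T \<mu>" "openin T U"
  shows "U \<in> sets \<mu>"
  using assms by (auto simp: haar_measure_def intro: sigma_sets.Basic)

lemma (in normal) haar_measure_rcoset:
  assumes tg: "topological_group G T" and haar: "haar_measure G T \<mu>"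
    and H_open: "openin T H" and a: "a \<in> carrier G"
  shows "H #> a \<in> sets \<mu>" "measure \<mu> (H #> a) = measure \<mu> H"
proof -
  show "H #> a \<in> sets \<mu>"
    by (rule sets_haar_measure_openin[OF haar openin_r_coset[OF tg a H_open]])
  have "emeasure \<mu> (a <# H) = emeasure \<mu> H"
    using haar a sets_haar_measure_openin[OF haar H_open] by (simp add: haar_measure_def)
  then show "measure \<mu> (H #> a) = measure \<mu> H"
    using coset_eq a by (simp add: measure_def)
qed

lemma (in normal) haar_measure_Union_rcosets:
  assumes tg: "topological_group G T" and haar: "haar_measure G T \<mu>"
    and H_open: "openin T H" and fin: "finite (carrier (G Mod H))" and S: "S \<subseteq> carrier (G Mod H)"
  shows "\<Union>S \<in> sets \<mu>" "measure \<mu> (\<Union>S) = card S / card (carrier (G Mod H))"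
proof -
  interpret finite_measure \<mu> by (rule finite_measure_haar_measure[OF haar])
  have cosets: "C \<in> sets \<mu>" "measure \<mu> C = measure \<mu> H" if "C \<in> carrier (G Mod H)" for C
    using that haar_measure_rcoset[OF tg haar H_open] by (auto simp: carrier_FactGroup)
  have measure_Union: "measure \<mu> (\<Union>S') = card S' * measure \<mu> H" if S': "S' \<subseteq> carrier (G Mod H)" for S'
  proof -
    have "disjoint_family_on (\<lambda>C. C) S'"
      using rcos_disjoint[OF is_subgroup] S'
      unfolding disjoint_family_on_def pairwise_def disjnt_def FactGroup_def by auto
    then have "measure \<mu> (\<Union>C \<in> S'. C) = (\<Sum>C \<in> S'. measure \<mu> C)"
      using finite_measure_finite_Union[of S' "\<lambda>C. C"] finite_subset[OF S' fin] cosets S' by auto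
    also have "\<dots> = card S' * measure \<mu> H"
      using cosets S' by (simp add: subset_iff)
    finally show ?thesis by simp
  qed
  have "\<Union>(carrier (G Mod H)) = carrier G"
    using rcosets_part_G[OF is_subgroup] by (simp add: FactGroup_def)
  then have "1 = card (carrier (G Mod H)) * measure \<mu> H"
    using measure_Union[of "carrier (G Mod H)"] haar by (simp add: haar_measure_def measure_def)
  then have "measure \<mu> H = 1 / card (carrier (G Mod H))"
    by (cases "card (carrier (G Mod H)) = 0") (auto simp: field_simps)
  then show "measure \<mu> (\<Union>S) = card S / card (carrier (G Mod H))"
    using measure_Union[OF S] by simp
  show "\<Union>S \<in> sets \<mu>"
    using cosets S finite_subset[OF S fin] by (intro sets.finite_Union) auto
qed

lemma (in normal) haar_measure_X_set_le:
  assumes tg: "topological_group G T" and haar: "haar_measure G T \<mu>"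
    and H_open: "openin T H" and fin: "finite (carrier (G Mod H))"
    and \<phi>: "\<phi> \<in> hom G G" and \<phi>H: "\<phi> ` H = H"
  shows "measure \<mu> (X_set G n \<phi>) \<le> card (X_set (G Mod H) n ((`) \<phi>)) / card (carrier (G Mod H))"
proof -
  interpret finite_measure \<mu> by (rule finite_measure_haar_measure[OF haar])
  note Union = haar_measure_Union_rcosets[OF tg haar H_open fin, of "X_set (G Mod H) n ((`) \<phi>)"]
  have "measure \<mu> (X_set G n \<phi>) \<le> measure \<mu> (\<Union>(X_set (G Mod H) n ((`) \<phi>)))"
    using X_set_subset_Union_FactGroup[OF \<phi> \<phi>H] Union by (intro finite_measure_mono) (auto simp: X_set_def)
  also have "\<dots> = card (X_set (G Mod H) n ((`) \<phi>)) / card (carrier (G Mod H))"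
    using Union by (auto simp: X_set_def)
  finally show ?thesis .
qed

theorem proposition2p5:
  fixes G :: "('a, 'm) monoid_scheme" and T :: "'a topology"
    and M :: "'a set" and \<phi> :: "'a \<Rightarrow> 'a" and n :: nat
    and Cls :: "('b, 'c) monoid_scheme \<Rightarrow> bool"
    and \<mu> :: "'a measure"
  assumes n_pos: "n > 0"
    and X_finite_groups: "\<And>H. Cls H \<Longrightarrow> group H \<and> finite (carrier H)"
    and c_lt: "c_const Cls n < 1"
    and G_prof: "profinite_group G T"
    and M_normal: "M \<lhd> G" and M_open: "openin T M"
    and phi_aut: "\<phi> \<in> iso (G\<lparr>carrier := M\<rparr>) (G\<lparr>carrier := M\<rparr>)"
    and phi_cont: "continuous_map (subtopology T M) (subtopology T M) \<phi>"
    and phi_n: "\<forall>x \<in> M. (\<phi> ^^ n) x = x"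
    and hyp_N: "\<And>N. N \<lhd> G \<Longrightarrow> openin T N \<Longrightarrow> N \<subseteq> M \<Longrightarrow>
                   \<phi> ` N \<subseteq> N \<and> (\<exists>H. Cls H \<and> (G\<lparr>carrier := M\<rparr> Mod N) \<cong> H)"
    and haar: "haar_measure (G\<lparr>carrier := M\<rparr>) (subtopology T M) \<mu>"
    and neq: "X_set (G\<lparr>carrier := M\<rparr>) n \<phi> \<noteq> M"
  shows "measure \<mu> (X_set (G\<lparr>carrier := M\<rparr>) n \<phi>) \<le> c_const Cls n"
proof -
  define K where "K = G\<lparr>carrier := M\<rparr>"
  have tg: "topological_group G T" using G_prof by (simp add: profinite_group_def)
  then have G: "group G" by (simp add: topological_group_def)
  have M: "subgroup M G" using M_normal by (simp add: normal_def)
  have \<phi>: "\<phi> \<in> hom K K" "\<phi> ` M \<subseteq> M" using phi_aut by (auto simp: K_def iso_def hom_def)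
  obtain x where x: "x \<in> M" "twisted_prod K \<phi> n x \<noteq> \<one>\<^bsub>G\<^esub>"
    using neq by (auto simp: X_set_def K_def)
  moreover have "twisted_prod K \<phi> n x \<in> carrier G"
    using twisted_prod_closed[OF group.is_monoid[OF subgroup.subgroup_is_group[OF M G]]] \<phi>(2) x(1)
      subgroup.subset[OF M] by (auto simp: K_def)
  ultimately obtain N where N: "N \<lhd> G" "openin T N" "N \<subseteq> M" "twisted_prod K \<phi> n x \<notin> N"
    using group.profinite_open_normal_subgroup_avoiding[OF G G_prof M M_open] by metis
  obtain H where H: "Cls H" "K Mod N \<cong> H" and "\<phi> ` N \<subseteq> N"
    using hyp_N[OF N(1-3)] by (auto simp: K_def)
  have NK: "N \<lhd> K" unfolding K_def by (rule group.normal_restrict_supergroup[OF G M N(1,3)])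
  have \<phi>N: "\<phi> ` N = N"
    using bij_betw_if_funpow_id[OF \<open>\<phi> ` N \<subseteq> N\<close> _ n_pos] phi_n N(3) by (auto simp: bij_betw_def)
  have aut: "aut_order_dvd (K Mod N) n ((`) \<phi>)"
    using normal.aut_order_dvd_FactGroup[OF NK \<phi>(1) \<phi>N _ n_pos] phi_n by (simp add: K_def)
  have proper: "X_set (K Mod N) n ((`) \<phi>) \<noteq> carrier (K Mod N)"
    using normal.r_coset_in_X_set_FactGroup_iff[OF NK \<phi>(1) \<phi>N, of x] x N(4)
    by (auto simp: K_def carrier_FactGroup)
  have fin: "finite (carrier (K Mod N))"
    using iso_finite[OF H(2)] X_finite_groups[OF H(1)] by simp
  have "openin (subtopology T M) N"
    using N(2,3) unfolding openin_subtopology by blast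
  then have "measure \<mu> (X_set K n \<phi>) \<le> card (X_set (K Mod N) n ((`) \<phi>)) / card (carrier (K Mod N))"
    using normal.haar_measure_X_set_le[OF NK _ haar[folded K_def] _ fin \<phi>(1) \<phi>N]
      topological_group_subgroup[OF tg M] by (simp add: K_def)
  also have "\<dots> \<le> c_const Cls n"
    using X_set_ratio_le_c_const[of Cls, OF X_finite_groups H(1)
        normal.factorgroup_is_group[OF NK] H(2) aut proper] .
  finally show ?thesis by (simp add: K_def)
qed

end
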